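(* Let $\mathcal{G}=(\mathcal{V},\mathcal{E},w)$ be a simple connected weighted graph with at least two vertices, $s\in\mathcal{V}$, $\beta\in(0,1)$. Let $\dot{\mathcal{V}}\subsetneq\mathcal{V}$ be a subset with $s\in\dot{\mathcal{V}}$ that contains every neighbour of $s$ and induces a connected subgraph. Let $T^\infty=\beta D^\infty+D^{-1}L$ where $D^\infty$ is diagonal with $D^\infty_{vv}=d(v)$ for $v\in\dot{\mathcal{V}}$ and $D^\infty_{vv}=0$ otherwise, and let $x$ solve $T^\infty x=\beta r$ with $r$ the indicator vector of $s$. Then every vertex at which $x$ attains its maximum equals $s$, and $x(s)<1/d(s)$.
   Context: $d(v)=\sum_{u\sim v}w(u,v)$ is the weighted degree, $D=\operatorname{diag}(d(v))$, $A$ the weighted adjacency matrix, $L=D-A$. $r(s)=1$, $r(v)=0$ for $v\ne s$. *)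

theory Defs
  imports Complex_Main
begin

definition weighted_graph :: "'a set \<Rightarrow> ('a \<Rightarrow> 'a \<Rightarrow> real) \<Rightarrow> bool" where
  "weighted_graph V w \<longleftrightarrow> finite V \<and>
     (\<forall>u v. w u v = w v u) \<and> (\<forall>u v. w u v \<ge> 0) \<and> (\<forall>v. w v v = 0) \<and>
     (\<forall>u v. w u v \<noteq> 0 \<longrightarrow> u \<in> V \<and> v \<in> V)"

definition adj :: "('a \<Rightarrow> 'a \<Rightarrow> real) \<Rightarrow> 'a \<Rightarrow> 'a \<Rightarrow> bool" where
  "adj w u v \<longleftrightarrow> w u v > 0"

definition connected_on :: "('a \<Rightarrow> 'a \<Rightarrow> real) \<Rightarrow> 'a set \<Rightarrow> bool" where
  "connected_on w S \<longleftrightarrow>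
     (\<forall>u\<in>S. \<forall>v\<in>S. (\<lambda>a b. a \<in> S \<and> b \<in> S \<and> adj w a b)\<^sup>*\<^sup>* u v)"

definition wdeg :: "'a set \<Rightarrow> ('a \<Rightarrow> 'a \<Rightarrow> real) \<Rightarrow> 'a \<Rightarrow> real" where
  "wdeg V w v = (\<Sum>u\<in>V. w u v)"

definition lap_apply :: "'a set \<Rightarrow> ('a \<Rightarrow> 'a \<Rightarrow> real) \<Rightarrow> ('a \<Rightarrow> real) \<Rightarrow> 'a \<Rightarrow> real" where
  "lap_apply V w x v = wdeg V w v * x v - (\<Sum>u\<in>V. w v u * x u)"

definition Tinf_apply :: "'a set \<Rightarrow> ('a \<Rightarrow> 'a \<Rightarrow> real) \<Rightarrow> real \<Rightarrow> 'a set \<Rightarrow> ('a \<Rightarrow> real) \<Rightarrow> 'a \<Rightarrow> real" where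
  "Tinf_apply V w \<beta> Vd x v =
     \<beta> * (if v \<in> Vd then wdeg V w v else 0) * x v + lap_apply V w x v / wdeg V w v"

definition indicator_vec :: "'a \<Rightarrow> 'a \<Rightarrow> real" where
  "indicator_vec s v = (if v = s then 1 else 0)"

end

theory Submission
  imports Defs
begin

text \<open>Multiplying the equation at v by d(v) gives
  \<open>\<beta> d(v)\<^sup>2 x(v) + (Lx)(v) = \<beta> d(s) [v = s]\<close> on \<open>Vd\<close> and \<open>(Lx)(v) = 0\<close> off \<open>Vd\<close>. By the
  discrete maximum principle a maximum (or minimum) of x attained outside \<open>Vd\<close> spreads along
  a path towards s, and since all neighbours of s lie in \<open>Vd\<close> it reaches a vertex of
  \<open>Vd - {s}\<close>. At a minimiser in \<open>Vd\<close> the equation forces \<open>x \<ge> 0\<close>; at a maximiser in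
  \<open>Vd - {s}\<close> it forces \<open>x \<le> 0\<close>, hence \<open>x = 0\<close>, contradicting the equation at s. So s is the
  unique maximiser, the Laplacian is positive there, and \<open>\<beta> d(s)\<^sup>2 x(s) < \<beta> d(s)\<close>.\<close>

locale connected_weighted_graph =
  fixes V :: "'a set" and w :: "'a \<Rightarrow> 'a \<Rightarrow> real"
  assumes graph: "weighted_graph V w"
    and conn: "connected_on w V"
    and two_vertices: "card V \<ge> 2"
begin

lemma finite_V: "finite V"
  and w_sym: "w u v = w v u"
  and w_nonneg: "w u v \<ge> 0"
  and w_diag: "w v v = 0"
  and w_support: "w u v \<noteq> 0 \<Longrightarrow> u \<in> V \<and> v \<in> V"
  using graph unfolding weighted_graph_def by auto

lemma adj_in_V: "adj w u v \<Longrightarrow> u \<in> V \<and> v \<in> V"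
  using w_support[of u v] by (simp add: adj_def)

lemma adj_sym: "adj w u v \<longleftrightarrow> adj w v u"
  by (simp add: adj_def w_sym)

lemma walk: "u \<in> V \<Longrightarrow> v \<in> V \<Longrightarrow> (\<lambda>a b. a \<in> V \<and> b \<in> V \<and> adj w a b)\<^sup>*\<^sup>* u v"
  using conn unfolding connected_on_def by simp

lemma ex_maximiser:
  fixes x :: "'a \<Rightarrow> 'b::linorder"
  shows "\<exists>v\<in>V. \<forall>u\<in>V. x u \<le> x v"
proof -
  have "V \<noteq> {}" using two_vertices by auto
  then have "Max (x ` V) \<in> x ` V" using finite_V by (intro Max_in) auto
  then obtain v where "v \<in> V" "Max (x ` V) = x v" by auto
  moreover have "x u \<le> Max (x ` V)" if "u \<in> V" for u
    using finite_V that by (intro Max_ge) auto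
  ultimately show ?thesis by auto
qed

lemma ex_neighbour: assumes "v \<in> V" obtains u where "adj w v u"
proof -
  have "\<not> card V \<le> Suc 0" using two_vertices by simp
  then obtain u where "u \<in> V" "u \<noteq> v"
    using card_le_Suc0_iff_eq[OF finite_V] by blast
  with walk[OF \<open>v \<in> V\<close>] show ?thesis
    using that by (auto elim: converse_rtranclpE)
qed

lemma wdeg_pos: assumes "v \<in> V" shows "wdeg V w v > 0"
proof -
  obtain u where "adj w v u" using ex_neighbour assms .
  then have "0 < w u v" "u \<in> V" using adj_in_V by (auto simp: adj_def w_sym)
  moreover have "w u v \<le> wdeg V w v"
    unfolding wdeg_def using \<open>u \<in> V\<close> by (intro member_le_sum finite_V w_nonneg)
  ultimately show ?thesis by linarith
qed

lemma lap_apply_eq_sum: "lap_apply V w x v = (\<Sum>u\<in>V. w v u * (x v - x u))"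
  by (simp add: lap_apply_def wdeg_def w_sym[of _ v] sum_distrib_right
      right_diff_distrib sum_subtractf)

lemma lap_apply_uminus: "lap_apply V w (\<lambda>u. - x u) v = - lap_apply V w x v"
  by (simp add: lap_apply_eq_sum sum_negf[symmetric] algebra_simps)

lemma lap_apply_nonneg_at_max:
  "\<forall>u\<in>V. x u \<le> x v \<Longrightarrow> 0 \<le> lap_apply V w x v"
  unfolding lap_apply_eq_sum by (intro sum_nonneg) (simp add: w_nonneg)

lemma lap_apply_zero_at_max:
  assumes max: "\<forall>u\<in>V. x u \<le> x v" and zero: "lap_apply V w x v = 0" and "adj w v u"
  shows "x u = x v"
proof -
  have "\<forall>u\<in>V. w v u * (x v - x u) = 0"
    using zero max unfolding lap_apply_eq_sum
    by (subst (asm) sum_nonneg_eq_0_iff[OF finite_V]) (auto simp: w_nonneg)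
  moreover have "u \<in> V" "w v u > 0" using \<open>adj w v u\<close> adj_in_V by (auto simp: adj_def)
  ultimately show ?thesis by auto
qed

lemma max_reaches_Vd:
  assumes harmonic: "\<forall>v\<in>V - Vd. lap_apply V w x v = 0"
    and "s \<in> V" "s \<in> Vd" and nbrs: "\<forall>u. adj w s u \<longrightarrow> u \<in> Vd"
    and "v \<in> V - Vd" and "\<forall>u\<in>V. x u \<le> x v"
  shows "\<exists>b\<in>Vd - {s}. \<forall>u\<in>V. x u \<le> x b"
proof -
  have "(\<lambda>a b. a \<in> V \<and> b \<in> V \<and> adj w a b)\<^sup>*\<^sup>* v s"
    using walk assms(2,5) by blast
  then show ?thesis using assms(5,6)
  proof (induction rule: converse_rtranclp_induct)
    case base
    then show ?case using \<open>s \<in> Vd\<close> by simp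
  next
    case (step a b)
    then have "b \<in> V" "adj w a b" by simp_all
    moreover have "x b = x a"
      using lap_apply_zero_at_max step.prems harmonic \<open>adj w a b\<close> by blast
    ultimately have b_max: "\<forall>u\<in>V. x u \<le> x b" using step.prems by simp
    show ?case
    proof (cases "b \<in> Vd")
      case True
      have "b \<noteq> s" using step.prems \<open>adj w a b\<close> nbrs adj_sym by blast
      with True b_max show ?thesis by blast
    qed (use step.IH \<open>b \<in> V\<close> b_max in blast)
  qed
qed

lemma min_reaches_Vd:
  assumes harmonic: "\<forall>v\<in>V - Vd. lap_apply V w x v = 0"
    and "s \<in> V" "s \<in> Vd" and nbrs: "\<forall>u. adj w s u \<longrightarrow> u \<in> Vd"
    and "v \<in> V - Vd" and "\<forall>u\<in>V. x v \<le> x u"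
  shows "\<exists>b\<in>Vd - {s}. \<forall>u\<in>V. x b \<le> x u"
  using max_reaches_Vd[of Vd "\<lambda>u. - x u"] assms by (simp add: lap_apply_uminus)

end

locale Tinf_solution = connected_weighted_graph +
  fixes Vd :: "'a set" and s :: 'a and \<beta> :: real and x :: "'a \<Rightarrow> real"
  assumes Vd_sub: "Vd \<subseteq> V"
    and s_Vd: "s \<in> Vd"
    and nbrs: "\<forall>u. adj w s u \<longrightarrow> u \<in> Vd"
    and beta_pos: "0 < \<beta>"
    and sol: "\<forall>v\<in>V. Tinf_apply V w \<beta> Vd x v = \<beta> * indicator_vec s v"
begin

abbreviation d where "d \<equiv> wdeg V w"
abbreviation L where "L \<equiv> lap_apply V w x"

lemma s_in_V: "s \<in> V"
  using s_Vd Vd_sub by blast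

lemma sol_scaled:
  assumes "v \<in> V"
  shows "\<beta> * (if v \<in> Vd then d v else 0) * x v * d v + L v = \<beta> * indicator_vec s v * d v"
proof -
  have "(\<beta> * (if v \<in> Vd then d v else 0) * x v + L v / d v) * d v
      = \<beta> * indicator_vec s v * d v"
    using sol assms unfolding Tinf_apply_def by simp
  then show ?thesis using wdeg_pos[OF assms] by (simp add: distrib_right)
qed

lemma harmonic_outside: "\<forall>v\<in>V - Vd. L v = 0"
  using sol_scaled s_Vd by (force simp: indicator_vec_def)

lemma sol_in_Vd:
  assumes "v \<in> Vd"
  shows "\<beta> * d v ^ 2 * x v + L v = (if v = s then \<beta> * d v else 0)"
proof -
  have sq: "\<beta> * d v ^ 2 * x v = \<beta> * d v * x v * d v" by algebra
  have "\<beta> * d v * x v * d v + L v = \<beta> * indicator_vec s v * d v"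
    using sol_scaled assms Vd_sub by fastforce
  then show ?thesis unfolding sq by (cases "v = s") (simp_all add: indicator_vec_def)
qed

lemma coeff_pos: assumes "v \<in> Vd" shows "0 < \<beta> * d v ^ 2"
proof -
  have "0 < d v" using wdeg_pos assms Vd_sub by blast
  then show ?thesis using beta_pos by simp
qed

lemma solution_nonneg: assumes "v \<in> V" shows "0 \<le> x v"
proof -
  obtain m where "m \<in> V" and m_min: "\<forall>u\<in>V. x m \<le> x u"
    using ex_maximiser[of "\<lambda>u. - x u"] by auto
  have "\<exists>m'\<in>Vd. \<forall>u\<in>V. x m' \<le> x u"
  proof (cases "m \<in> Vd")
    case False
    with \<open>m \<in> V\<close> have "m \<in> V - Vd" by simp
    from min_reaches_Vd[OF harmonic_outside s_in_V s_Vd nbrs this m_min] show ?thesis by blast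
  qed (use m_min in blast)
  then obtain m' where "m' \<in> Vd" and m'_min: "\<forall>u\<in>V. x m' \<le> x u" by blast
  have "L m' \<le> 0"
    using lap_apply_nonneg_at_max[of "\<lambda>u. - x u"] m'_min by (simp add: lap_apply_uminus)
  moreover have "0 \<le> (if m' = s then \<beta> * d m' else 0)"
    using beta_pos wdeg_pos[OF s_in_V] by simp
  ultimately have "0 \<le> \<beta> * d m' ^ 2 * x m'" using sol_in_Vd[OF \<open>m' \<in> Vd\<close>] by linarith
  then have "0 \<le> x m'" using mult_le_cancel_left_pos[OF coeff_pos[OF \<open>m' \<in> Vd\<close>], of 0] by simp
  moreover have "x m' \<le> x v" using m'_min assms by blast
  ultimately show ?thesis by linarith
qed

lemma no_max_in_Vd:
  assumes "v \<in> Vd - {s}" shows "\<not> (\<forall>u\<in>V. x u \<le> x v)"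
proof
  assume v_max: "\<forall>u\<in>V. x u \<le> x v"
  have "\<beta> * d v ^ 2 * x v + L v = 0" using sol_in_Vd[of v] assms by simp
  then have "\<beta> * d v ^ 2 * x v = - L v" by linarith
  also have "\<dots> \<le> 0" using lap_apply_nonneg_at_max[OF v_max] by simp
  finally have "x v \<le> 0" using mult_le_cancel_left_pos[OF coeff_pos, of v _ 0] assms by simp
  then have zero: "\<forall>u\<in>V. x u = 0" using v_max solution_nonneg by (meson order.antisym order.trans)
  then have "L s = 0" using s_in_V by (simp add: lap_apply_eq_sum)
  then have "\<beta> * d s = 0" using sol_in_Vd[OF s_Vd] zero s_in_V by simp
  then show False using beta_pos wdeg_pos[OF s_in_V] by simp
qed

lemma max_only_at_s: "v \<in> V \<Longrightarrow> \<forall>u\<in>V. x u \<le> x v \<Longrightarrow> v = s"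
  using no_max_in_Vd max_reaches_Vd[OF harmonic_outside s_in_V s_Vd nbrs] by blast

lemma max_at_s: "\<forall>u\<in>V. x u \<le> x s"
  using ex_maximiser max_only_at_s by blast

lemma lap_pos_at_s: "0 < L s"
proof -
  obtain u where "adj w s u" using ex_neighbour s_in_V .
  have "L s \<noteq> 0"
  proof
    assume "L s = 0"
    then have "x u = x s" using lap_apply_zero_at_max[OF max_at_s] \<open>adj w s u\<close> by blast
    then have "u = s" using max_only_at_s max_at_s adj_in_V \<open>adj w s u\<close> by simp
    then show False using \<open>adj w s u\<close> w_diag by (simp add: adj_def)
  qed
  then show ?thesis using lap_apply_nonneg_at_max[OF max_at_s] by simp
qed

lemma value_at_s_bound: "x s < 1 / d s"
proof -
  have ds: "0 < d s" using wdeg_pos s_in_V by blast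
  have "\<beta> * d s * (d s * x s) < \<beta> * d s * 1"
    using sol_in_Vd[OF s_Vd] lap_pos_at_s by (simp add: power2_eq_square algebra_simps)
  then have "d s * x s < 1" using beta_pos ds by simp
  then show ?thesis using ds by (simp add: field_simps)
qed

end

theorem mainTheorem9:
  fixes V :: "'a set" and w :: "'a \<Rightarrow> 'a \<Rightarrow> real" and s :: 'a and \<beta> :: real
    and Vd :: "'a set" and x :: "'a \<Rightarrow> real"
  assumes graph: "weighted_graph V w"
    and conn: "connected_on w V"
    and two: "card V \<ge> 2"
    and sV: "s \<in> V"
    and beta: "0 < \<beta>" "\<beta> < 1"
    and Vd_sub: "Vd \<subset> V"
    and s_Vd: "s \<in> Vd"
    and nbrs: "\<forall>u. adj w s u \<longrightarrow> u \<in> Vd"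
    and Vd_conn: "connected_on w Vd"
    and sol: "\<forall>v\<in>V. Tinf_apply V w \<beta> Vd x v = \<beta> * indicator_vec s v"
  shows "(\<forall>v\<in>V. (\<forall>u\<in>V. x u \<le> x v) \<longrightarrow> v = s) \<and> x s < 1 / wdeg V w s"
proof -
  interpret Tinf_solution V w Vd s \<beta> x
    using graph conn two Vd_sub s_Vd nbrs beta(1) sol by unfold_locales auto
  show ?thesis using max_only_at_s value_at_s_bound by blast
qed

end
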